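(* Let $K\subseteq\mathbb{M}_\xi\Sigma$ be a language with a syntactic algebra. A language $L\subseteq\mathbb{M}_\zeta\Gamma$ over an alphabet $\Gamma$ is recognised by some morphism of $\mathbb{M}$-algebras $\mathbb{M}\Gamma\to\mathrm{Syn}(K)$ if, and only if, $$L=\varphi^{-1}\Bigl[\bigcup_{i<m}\bigcap_{k<n_i}p_{ik}^{-1}[K]\Bigr]$$ for some morphism of $\mathbb{M}$-algebras $\varphi:\mathbb{M}\Gamma\to\mathbb{M}\Sigma$, numbers $m,n_i<\omega$, and contexts $p_{ik}\in\mathbb{M}_\xi(\Sigma+\{\Box\})$ with hole of sort $\zeta$.
   Context: Fix a set $\Xi$ of sorts. $\mathsf{Pos}^\Xi$: $\Xi$-sorted families of partial orders ("sets") with sort-wise order-preserving maps. $\mathbb{M}$ is a monad on $\mathsf{Pos}^\Xi$ (with $\mathrm{flat}$, $\mathrm{sing}$) preserving injective, surjective, bijective functions and preimages, and using the standard ordering (the order on $\mathbb{M}A$ is $\{(\mathbb{M}p(u),\mathbb{M}q(u)):u\in\mathbb{M}R\}$, $R$ the order of $A$). $\mathbb{M}$-algebras $\langle A,\pi\rangle$ satisfy $\pi\circ\mathbb{M}\pi=\pi\circ\mathrm{flat}$, $\pi\circ\mathrm{sing}=\mathrm{id}$; morphisms commute with products; $\mathbb{M}\Sigma$ with $\mathrm{flat}$ is the free algebra. An alphabet is a finite unordered set; a language is $K\subseteq\mathbb{M}_\xi\Sigma$; a morphism $f:\mathbb{M}\Sigma\to\mathfrak{A}$ recognises $K$ if $K=f^{-1}[P]$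 for some upwards closed $P\subseteq A_\xi$. A context with hole of sort $\zeta$ is $p\in\mathbb{M}(\Sigma+\{\Box\})$, $\Box$ a new symbol of sort $\zeta$; $p[s]$ ($s\in\mathbb{M}_\zeta\Sigma$) is the image of $p$ under the algebra morphism $\mathbb{M}(\Sigma+\{\Box\})\to\mathbb{M}\Sigma$ extending $\Box\mapsto s$, $c\mapsto\mathrm{sing}(c)$; $p^{-1}[K]=\{s:p[s]\in K\}$. Syntactic congruence: $s\preceq_K t$ ($s,t$ of the same sort $\zeta$) iff $p[s]\in K\Rightarrow p[t]\in K$ for all contexts $p\in\mathbb{M}_\xi(\Sigma+\{\Box\})$ with hole of sort $\zeta$. A preorder containing the order is a congruence ordering if $\mathbb{M}q(s)\leq\mathbb{M}q(t)$ implies $\pi(s)\sqsubseteq\pi(t)$ for the quotient map $q$ onto the ordered set of classes; then the quotient is an algebra with $\pi\circ\mathbb{M}q=q\circ\pi$. $K$ has a syntactic algebra if $\preceq_K$ is a congruence ordering with sort-wise finite quotient; $\mathrm{Syn}(K)=\mathbb{M}\Sigma/{\preceq_K}$, $\mathrm{syn}_K$ the quotient morphism. *)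

theory Defs
  imports Main
begin

text \<open>A \<Xi>-sorted ordered set is modelled inside a universe type 'u:
  a carrier per sort together with an order relation per sort.
  Sorted functions are maps 's => 'u => 'u (only their values on the carrier matter).\<close>

type_synonym ('s,'u) pos = "('s \<Rightarrow> 'u set) \<times> ('s \<Rightarrow> 'u \<Rightarrow> 'u \<Rightarrow> bool)"
type_synonym ('s,'u) smap = "'s \<Rightarrow> 'u \<Rightarrow> 'u"

definition carr :: "('s,'u) pos \<Rightarrow> 's \<Rightarrow> 'u set" where
  "carr A = fst A"

definition leq :: "('s,'u) pos \<Rightarrow> 's \<Rightarrow> 'u \<Rightarrow> 'u \<Rightarrow> bool" where
  "leq A = snd A"

definition is_pos :: "('s,'u) pos \<Rightarrow> bool" where
  "is_pos A \<longleftrightarrow> (\<forall>s.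
      (\<forall>x\<in>carr A s. leq A s x x) \<and>
      (\<forall>x\<in>carr A s. \<forall>y\<in>carr A s. leq A s x y \<and> leq A s y x \<longrightarrow> x = y) \<and>
      (\<forall>x\<in>carr A s. \<forall>y\<in>carr A s. \<forall>z\<in>carr A s. leq A s x y \<and> leq A s y z \<longrightarrow> leq A s x z))"

definition is_mor :: "('s,'u) pos \<Rightarrow> ('s,'u) pos \<Rightarrow> ('s,'u) smap \<Rightarrow> bool" where
  "is_mor A B f \<longleftrightarrow> (\<forall>s.
      (\<forall>x\<in>carr A s. f s x \<in> carr B s) \<and>
      (\<forall>x\<in>carr A s. \<forall>y\<in>carr A s. leq A s x y \<longrightarrow> leq B s (f s x) (f s y)))"

definition agree :: "('s,'u) pos \<Rightarrow> ('s,'u) smap \<Rightarrow> ('s,'u) smap \<Rightarrow> bool" where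
  "agree A f g \<longleftrightarrow> (\<forall>s. \<forall>x\<in>carr A s. f s x = g s x)"

definition subpos :: "('s,'u) pos \<Rightarrow> ('s \<Rightarrow> 'u set) \<Rightarrow> ('s,'u) pos" where
  "subpos B C = (C, leq B)"

definition disc :: "('s \<Rightarrow> 'u set) \<Rightarrow> ('s,'u) pos" where
  "disc S = (S, \<lambda>s x y. x = y)"

definition alphabet :: "('s \<Rightarrow> 'u set) \<Rightarrow> bool" where
  "alphabet S \<longleftrightarrow> finite {(s, x). x \<in> S s}"

text \<open>The universe comes with codings of pairs (pr) and of binary coproducts (inl, inr);
  the monad is given by its action on objects (the underlying sorted sets; the order is the
  standard ordering, see Mobj), on maps, and by sing and flat.\<close>

record ('s,'u) mnd =
  pr :: "'u \<Rightarrow> 'u \<Rightarrow> 'u"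
  inl :: "'u \<Rightarrow> 'u"
  inr :: "'u \<Rightarrow> 'u"
  Mset :: "('s,'u) pos \<Rightarrow> 's \<Rightarrow> 'u set"
  Mmap :: "('s,'u) pos \<Rightarrow> ('s,'u) smap \<Rightarrow> ('s,'u) smap"
  sing :: "('s,'u) pos \<Rightarrow> ('s,'u) smap"
  flat :: "('s,'u) pos \<Rightarrow> ('s,'u) smap"

definition p1 :: "('s,'u) mnd \<Rightarrow> 'u \<Rightarrow> 'u" where
  "p1 T z = (THE x. \<exists>y. z = pr T x y)"

definition p2 :: "('s,'u) mnd \<Rightarrow> 'u \<Rightarrow> 'u" where
  "p2 T z = (THE y. \<exists>x. z = pr T x y)"

text \<open>The order R of A, viewed as an ordered set (componentwise order).\<close>
definition relobj :: "('s,'u) mnd \<Rightarrow> ('s,'u) pos \<Rightarrow> ('s,'u) pos" where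
  "relobj T A = (\<lambda>s. {pr T x y | x y. x \<in> carr A s \<and> y \<in> carr A s \<and> leq A s x y},
                 \<lambda>s z w. leq A s (p1 T z) (p1 T w) \<and> leq A s (p2 T z) (p2 T w))"

definition Mobj :: "('s,'u) mnd \<Rightarrow> ('s,'u) pos \<Rightarrow> ('s,'u) pos" where
  "Mobj T A = (Mset T A,
     \<lambda>s a b. \<exists>u\<in>Mset T (relobj T A) s.
        Mmap T (relobj T A) (\<lambda>_. p1 T) s u = a \<and> Mmap T (relobj T A) (\<lambda>_. p2 T) s u = b)"

definition monad_ok :: "('s,'u) mnd \<Rightarrow> bool" where
  "monad_ok T \<longleftrightarrow>
    (\<forall>a b c d. pr T a b = pr T c d \<longrightarrow> a = c \<and> b = d) \<and>
    inj (inl T) \<and> inj (inr T) \<and> (\<forall>x y. inl T x \<noteq> inr T y) \<and>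
    \<comment> \<open>M is an endofunctor of Pos^Xi (with the standard ordering)\<close>
    (\<forall>A. is_pos A \<longrightarrow> is_pos (Mobj T A)) \<and>
    (\<forall>A B f. is_pos A \<and> is_pos B \<and> is_mor A B f \<longrightarrow> is_mor (Mobj T A) (Mobj T B) (Mmap T A f)) \<and>
    (\<forall>A B f g. is_pos A \<and> is_pos B \<and> is_mor A B f \<and> agree A f g \<longrightarrow>
        agree (Mobj T A) (Mmap T A f) (Mmap T A g)) \<and>
    (\<forall>A. is_pos A \<longrightarrow> agree (Mobj T A) (Mmap T A (\<lambda>s x. x)) (\<lambda>s x. x)) \<and>
    (\<forall>A B C f g. is_pos A \<and> is_pos B \<and> is_pos C \<and> is_mor A B f \<and> is_mor B C g \<longrightarrow>
        agree (Mobj T A) (Mmap T A (\<lambda>s x. g s (f s x))) (\<lambda>s u. Mmap T B g s (Mmap T A f s u))) \<and>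
    \<comment> \<open>sing and flat are natural transformations\<close>
    (\<forall>A. is_pos A \<longrightarrow> is_mor A (Mobj T A) (sing T A)) \<and>
    (\<forall>A. is_pos A \<longrightarrow> is_mor (Mobj T (Mobj T A)) (Mobj T A) (flat T A)) \<and>
    (\<forall>A B f. is_pos A \<and> is_pos B \<and> is_mor A B f \<longrightarrow>
        agree A (\<lambda>s x. Mmap T A f s (sing T A s x)) (\<lambda>s x. sing T B s (f s x))) \<and>
    (\<forall>A B f. is_pos A \<and> is_pos B \<and> is_mor A B f \<longrightarrow>
        agree (Mobj T (Mobj T A)) (\<lambda>s u. Mmap T A f s (flat T A s u))
              (\<lambda>s u. flat T B s (Mmap T (Mobj T A) (Mmap T A f) s u))) \<and>
    \<comment> \<open>monad laws\<close>
    (\<forall>A. is_pos A \<longrightarrow> agree (Mobj T A) (\<lambda>s u. flat T A s (sing T (Mobj T A) s u)) (\<lambda>s u. u)) \<and>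
    (\<forall>A. is_pos A \<longrightarrow> agree (Mobj T A) (\<lambda>s u. flat T A s (Mmap T A (sing T A) s u)) (\<lambda>s u. u)) \<and>
    (\<forall>A. is_pos A \<longrightarrow> agree (Mobj T (Mobj T (Mobj T A)))
        (\<lambda>s u. flat T A s (flat T (Mobj T A) s u))
        (\<lambda>s u. flat T A s (Mmap T (Mobj T (Mobj T A)) (flat T A) s u))) \<and>
    \<comment> \<open>preservation of injective, surjective, bijective functions\<close>
    (\<forall>A B f. is_pos A \<and> is_pos B \<and> is_mor A B f \<and> (\<forall>s. inj_on (f s) (carr A s)) \<longrightarrow>
        (\<forall>s. inj_on (Mmap T A f s) (Mset T A s))) \<and>
    (\<forall>A B f. is_pos A \<and> is_pos B \<and> is_mor A B f \<and> (\<forall>s. f s ` carr A s = carr B s) \<longrightarrow>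
        (\<forall>s. Mmap T A f s ` Mset T A s = Mset T B s)) \<and>
    (\<forall>A B f. is_pos A \<and> is_pos B \<and> is_mor A B f \<and> (\<forall>s. bij_betw (f s) (carr A s) (carr B s)) \<longrightarrow>
        (\<forall>s. bij_betw (Mmap T A f s) (Mset T A s) (Mset T B s))) \<and>
    \<comment> \<open>preservation of preimages (M of the inclusion of f^-1[C] is (Mf)^-1 of M of the inclusion of C)\<close>
    (\<forall>A B f C. is_pos A \<and> is_pos B \<and> is_mor A B f \<and> (\<forall>s. C s \<subseteq> carr B s) \<longrightarrow>
        (\<forall>s. Mmap T (subpos A (\<lambda>s. {x \<in> carr A s. f s x \<in> C s})) (\<lambda>s x. x) s `
               Mset T (subpos A (\<lambda>s. {x \<in> carr A s. f s x \<in> C s})) s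
             = {u \<in> Mset T A s. Mmap T A f s u \<in>
                   Mmap T (subpos B C) (\<lambda>s x. x) s ` Mset T (subpos B C) s}))"

type_synonym ('s,'u) alg = "('s,'u) pos \<times> ('s,'u) smap"

definition is_alg :: "('s,'u) mnd \<Rightarrow> ('s,'u) alg \<Rightarrow> bool" where
  "is_alg T Al \<longleftrightarrow> (let A = fst Al; \<pi> = snd Al in
     is_pos A \<and> is_mor (Mobj T A) A \<pi> \<and>
     agree (Mobj T (Mobj T A)) (\<lambda>s u. \<pi> s (Mmap T (Mobj T A) \<pi> s u)) (\<lambda>s u. \<pi> s (flat T A s u)) \<and>
     agree A (\<lambda>s x. \<pi> s (sing T A s x)) (\<lambda>s x. x))"

definition alg_mor :: "('s,'u) mnd \<Rightarrow> ('s,'u) alg \<Rightarrow> ('s,'u) alg \<Rightarrow> ('s,'u) smap \<Rightarrow> bool" where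
  "alg_mor T Al Bl f \<longleftrightarrow>
     is_mor (fst Al) (fst Bl) f \<and>
     agree (Mobj T (fst Al)) (\<lambda>s u. f s (snd Al s u)) (\<lambda>s u. snd Bl s (Mmap T (fst Al) f s u))"

definition free :: "('s,'u) mnd \<Rightarrow> ('s \<Rightarrow> 'u set) \<Rightarrow> ('s,'u) alg" where
  "free T S = (Mobj T (disc S), flat T (disc S))"

definition recognises :: "('s,'u) alg \<Rightarrow> ('s,'u) alg \<Rightarrow> ('s,'u) smap \<Rightarrow> 's \<Rightarrow> 'u set \<Rightarrow> bool" where
  "recognises Dl Cl f \<xi> K \<longleftrightarrow> (\<exists>P. P \<subseteq> carr (fst Cl) \<xi> \<and>
      (\<forall>x\<in>P. \<forall>y\<in>carr (fst Cl) \<xi>. leq (fst Cl) \<xi> x y \<longrightarrow> y \<in> P) \<and>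
      K = {s \<in> carr (fst Dl) \<xi>. f \<xi> s \<in> P})"

definition box :: "('s,'u) mnd \<Rightarrow> 'u" where
  "box T = inr T undefined"

text \<open>Sigma + {box}, box a new symbol of sort zeta (coproduct coded via inl/inr).\<close>
definition holeobj :: "('s,'u) mnd \<Rightarrow> ('s \<Rightarrow> 'u set) \<Rightarrow> 's \<Rightarrow> ('s,'u) pos" where
  "holeobj T S \<zeta> = disc (\<lambda>s. inl T ` S s \<union> (if s = \<zeta> then {box T} else {}))"

definition ctxs :: "('s,'u) mnd \<Rightarrow> ('s \<Rightarrow> 'u set) \<Rightarrow> 's \<Rightarrow> 's \<Rightarrow> 'u set" where
  "ctxs T S \<zeta> \<xi> = Mset T (holeobj T S \<zeta>) \<xi>"

text \<open>p[t]: image of p under the algebra morphism M(Sigma+box) -> M Sigma extending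
  box |-> t, c |-> sing(c), i.e. flat o M h.\<close>
definition plug :: "('s,'u) mnd \<Rightarrow> ('s \<Rightarrow> 'u set) \<Rightarrow> 's \<Rightarrow> 's \<Rightarrow> 'u \<Rightarrow> 'u \<Rightarrow> 'u" where
  "plug T S \<zeta> \<xi> p t = flat T (disc S) \<xi>
     (Mmap T (holeobj T S \<zeta>)
        (\<lambda>s y. if s = \<zeta> \<and> y = box T then t else sing T (disc S) s (THE c. y = inl T c)) \<xi> p)"

definition ctx_pre :: "('s,'u) mnd \<Rightarrow> ('s \<Rightarrow> 'u set) \<Rightarrow> 's \<Rightarrow> 's \<Rightarrow> 'u \<Rightarrow> 'u set \<Rightarrow> 'u set" where
  "ctx_pre T S \<zeta> \<xi> p K = {t \<in> Mset T (disc S) \<zeta>. plug T S \<zeta> \<xi> p t \<in> K}"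

text \<open>Syntactic congruence of K of sort xi (as a sorted relation, argument = sort zeta).\<close>
definition synle :: "('s,'u) mnd \<Rightarrow> ('s \<Rightarrow> 'u set) \<Rightarrow> 's \<Rightarrow> 'u set \<Rightarrow> 's \<Rightarrow> 'u \<Rightarrow> 'u \<Rightarrow> bool" where
  "synle T S \<xi> K \<zeta> s t \<longleftrightarrow>
     (\<forall>p \<in> ctxs T S \<zeta> \<xi>. plug T S \<zeta> \<xi> p s \<in> K \<longrightarrow> plug T S \<zeta> \<xi> p t \<in> K)"

text \<open>The set of classes is represented by chosen representatives.\<close>
definition qrep :: "('s,'u) pos \<Rightarrow> ('s \<Rightarrow> 'u \<Rightarrow> 'u \<Rightarrow> bool) \<Rightarrow> ('s,'u) smap" where
  "qrep A sq s x = (SOME y. y \<in> carr A s \<and> sq s x y \<and> sq s y x)"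

definition quot :: "('s,'u) pos \<Rightarrow> ('s \<Rightarrow> 'u \<Rightarrow> 'u \<Rightarrow> bool) \<Rightarrow> ('s,'u) pos" where
  "quot A sq = (\<lambda>s. qrep A sq s ` carr A s, sq)"

definition cong_ord :: "('s,'u) mnd \<Rightarrow> ('s,'u) alg \<Rightarrow> ('s \<Rightarrow> 'u \<Rightarrow> 'u \<Rightarrow> bool) \<Rightarrow> bool" where
  "cong_ord T Al sq \<longleftrightarrow> (let A = fst Al; \<pi> = snd Al in
     (\<forall>s. (\<forall>x\<in>carr A s. sq s x x) \<and>
          (\<forall>x\<in>carr A s. \<forall>y\<in>carr A s. \<forall>z\<in>carr A s. sq s x y \<and> sq s y z \<longrightarrow> sq s x z) \<and>
          (\<forall>x\<in>carr A s. \<forall>y\<in>carr A s. leq A s x y \<longrightarrow> sq s x y)) \<and>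
     (\<forall>s. \<forall>u\<in>Mset T A s. \<forall>v\<in>Mset T A s.
        leq (Mobj T (quot A sq)) s (Mmap T A (qrep A sq) s u) (Mmap T A (qrep A sq) s v) \<longrightarrow>
        sq s (\<pi> s u) (\<pi> s v)))"

definition quot_alg :: "('s,'u) mnd \<Rightarrow> ('s,'u) alg \<Rightarrow> ('s \<Rightarrow> 'u \<Rightarrow> 'u \<Rightarrow> bool) \<Rightarrow> ('s,'u) alg" where
  "quot_alg T Al sq = (quot (fst Al) sq,
     \<lambda>s w. qrep (fst Al) sq s (snd Al s
        (SOME u. u \<in> Mset T (fst Al) s \<and> Mmap T (fst Al) (qrep (fst Al) sq) s u = w)))"

definition has_syn :: "('s,'u) mnd \<Rightarrow> ('s \<Rightarrow> 'u set) \<Rightarrow> 's \<Rightarrow> 'u set \<Rightarrow> bool" where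
  "has_syn T S \<xi> K \<longleftrightarrow> cong_ord T (free T S) (synle T S \<xi> K) \<and>
     (\<forall>s. finite (carr (quot (fst (free T S)) (synle T S \<xi> K)) s))"

definition Syn :: "('s,'u) mnd \<Rightarrow> ('s \<Rightarrow> 'u set) \<Rightarrow> 's \<Rightarrow> 'u set \<Rightarrow> ('s,'u) alg" where
  "Syn T S \<xi> K = quot_alg T (free T S) (synle T S \<xi> K)"

end

theory Submission
  imports Defs
begin

(* Since M Sigma is free and the quotient map syn_K onto Syn(K) is surjective, every morphism
   M Gamma -> Syn(K) is syn_K o phi for a morphism phi : M Gamma -> M Sigma, obtained by lifting the
   images of the generators. So the languages recognised by Syn(K) are exactly the preimages
   phi^-1[U] of sets U that are upward closed for the syntactic preorder. Every p^-1[K] is upward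
   closed, hence so is every finite union of finite intersections of them. Conversely, the up-set
   of t is the intersection of all p^-1[K] with p[t] in K; as every p^-1[K] is a union of the
   finitely many classes, only finitely many of these sets are distinct, so the intersection is
   finite, and an upward closed U is the finite union of the up-sets of its classes. *)

section \<open>Ordered sets, the monad and its algebras\<close>

lemma carr_Mobj [simp]: "carr (Mobj T A) = Mset T A"
  by (simp add: carr_def Mobj_def)

lemma carr_disc [simp]: "carr (disc S) = S"
  by (simp add: carr_def disc_def)

lemma leq_disc [simp]: "leq (disc S) s x y \<longleftrightarrow> x = y"
  by (simp add: leq_def disc_def)

lemma carr_quot [simp]: "carr (quot A sq) s = qrep A sq s ` carr A s"
  by (simp add: carr_def quot_def)

lemma leq_quot [simp]: "leq (quot A sq) = sq"
  by (simp add: leq_def quot_def)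

lemma fst_free [simp]: "fst (free T S) = Mobj T (disc S)"
  and snd_free [simp]: "snd (free T S) = flat T (disc S)"
  by (simp_all add: free_def)

lemma fst_quot_alg [simp]: "fst (quot_alg T Al sq) = quot (fst Al) sq"
  by (simp add: quot_alg_def)

lemma fst_Syn [simp]: "fst (Syn T S \<xi> K) = quot (Mobj T (disc S)) (synle T S \<xi> K)"
  by (simp add: Syn_def)

lemma disc_is_pos: "is_pos (disc S)"
  unfolding is_pos_def carr_disc leq_disc by blast

lemma is_pos_refl: "is_pos A \<Longrightarrow> x \<in> carr A s \<Longrightarrow> leq A s x x"
  unfolding is_pos_def by blast

lemma is_mor_in: "is_mor A B f \<Longrightarrow> x \<in> carr A s \<Longrightarrow> f s x \<in> carr B s"
  by (simp add: is_mor_def)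

lemma is_mor_comp: "is_mor A B f \<Longrightarrow> is_mor B C g \<Longrightarrow> is_mor A C (\<lambda>s x. g s (f s x))"
  unfolding is_mor_def by blast

lemma is_mor_from_disc:
  "is_pos B \<Longrightarrow> (\<And>s x. x \<in> S s \<Longrightarrow> h s x \<in> carr B s) \<Longrightarrow> is_mor (disc S) B h"
  unfolding is_mor_def by (simp add: is_pos_refl)

lemma is_algD:
  assumes "is_alg T Al"
  shows is_alg_is_pos: "is_pos (fst Al)"
    and is_alg_is_mor: "is_mor (Mobj T (fst Al)) (fst Al) (snd Al)"
    and is_alg_assoc: "u \<in> Mset T (Mobj T (fst Al)) s
      \<Longrightarrow> snd Al s (Mmap T (Mobj T (fst Al)) (snd Al) s u) = snd Al s (flat T (fst Al) s u)"
    and is_alg_unit: "x \<in> carr (fst Al) s \<Longrightarrow> snd Al s (sing T (fst Al) s x) = x"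
  using assms by (auto simp: is_alg_def agree_def Let_def)

lemma alg_morD:
  assumes "alg_mor T Al Bl f"
  shows alg_mor_is_mor: "is_mor (fst Al) (fst Bl) f"
    and alg_mor_commutes: "u \<in> Mset T (fst Al) s \<Longrightarrow> f s (snd Al s u) = snd Bl s (Mmap T (fst Al) f s u)"
  using assms by (auto simp: alg_mor_def agree_def)

(* The laws below are read off monad_ok; split_paired_All must be disabled, since splitting the
   quantified ordered sets into pairs stops the laws from matching. *)
context
  fixes T :: "('s,'u) mnd"
  assumes T: "monad_ok T"
begin

lemma Mobj_is_pos: "is_pos A \<Longrightarrow> is_pos (Mobj T A)"
  using T by (simp add: monad_ok_def del: split_paired_All)

lemma Mmap_is_mor:
  "is_pos A \<Longrightarrow> is_pos B \<Longrightarrow> is_mor A B f \<Longrightarrow> is_mor (Mobj T A) (Mobj T B) (Mmap T A f)"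
  using T by (simp add: monad_ok_def del: split_paired_All)

lemma sing_is_mor: "is_pos A \<Longrightarrow> is_mor A (Mobj T A) (sing T A)"
  using T by (simp add: monad_ok_def del: split_paired_All)

lemma flat_is_mor: "is_pos A \<Longrightarrow> is_mor (Mobj T (Mobj T A)) (Mobj T A) (flat T A)"
  using T by (simp add: monad_ok_def del: split_paired_All)

lemma Mmap_cong:
  assumes "is_pos A" "is_pos B" "is_mor A B f" "\<And>s x. x \<in> carr A s \<Longrightarrow> f s x = g s x"
    and "u \<in> Mset T A s"
  shows "Mmap T A f s u = Mmap T A g s u"
proof -
  have "agree A f g"
    using assms(4) by (simp add: agree_def)
  then have "agree (Mobj T A) (Mmap T A f) (Mmap T A g)"
    using T assms(1-3) by (simp add: monad_ok_def del: split_paired_All)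
  then show ?thesis
    using assms(5) by (simp add: agree_def)
qed

lemma Mmap_comp:
  assumes "is_pos A" "is_pos B" "is_pos C" "is_mor A B f" "is_mor B C g" "u \<in> Mset T A s"
  shows "Mmap T A (\<lambda>s x. g s (f s x)) s u = Mmap T B g s (Mmap T A f s u)"
proof -
  have "agree (Mobj T A) (Mmap T A (\<lambda>s x. g s (f s x))) (\<lambda>s u. Mmap T B g s (Mmap T A f s u))"
    using T assms(1-5) by (simp add: monad_ok_def del: split_paired_All)
  then show ?thesis
    using assms(6) by (simp add: agree_def)
qed

lemma Mmap_sing:
  assumes "is_pos A" "is_pos B" "is_mor A B f" "x \<in> carr A s"
  shows "Mmap T A f s (sing T A s x) = sing T B s (f s x)"
proof -
  have "agree A (\<lambda>s x. Mmap T A f s (sing T A s x)) (\<lambda>s x. sing T B s (f s x))"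
    using T assms(1-3) by (simp add: monad_ok_def del: split_paired_All)
  then show ?thesis
    using assms(4) by (simp add: agree_def)
qed

lemma Mmap_flat:
  assumes "is_pos A" "is_pos B" "is_mor A B f" "u \<in> Mset T (Mobj T A) s"
  shows "Mmap T A f s (flat T A s u) = flat T B s (Mmap T (Mobj T A) (Mmap T A f) s u)"
proof -
  have "agree (Mobj T (Mobj T A)) (\<lambda>s u. Mmap T A f s (flat T A s u))
      (\<lambda>s u. flat T B s (Mmap T (Mobj T A) (Mmap T A f) s u))"
    using T assms(1-3) by (simp add: monad_ok_def del: split_paired_All)
  then show ?thesis
    using assms(4) by (simp add: agree_def)
qed

lemma flat_sing:
  assumes "is_pos A" "u \<in> Mset T A s"
  shows "flat T A s (sing T (Mobj T A) s u) = u"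
proof -
  have "agree (Mobj T A) (\<lambda>s u. flat T A s (sing T (Mobj T A) s u)) (\<lambda>s u. u)"
    using T assms(1) by (simp add: monad_ok_def del: split_paired_All)
  then show ?thesis
    using assms(2) by (simp add: agree_def)
qed

lemma flat_Mmap_sing:
  assumes "is_pos A" "u \<in> Mset T A s"
  shows "flat T A s (Mmap T A (sing T A) s u) = u"
proof -
  have "agree (Mobj T A) (\<lambda>s u. flat T A s (Mmap T A (sing T A) s u)) (\<lambda>s u. u)"
    using T assms(1) by (simp add: monad_ok_def del: split_paired_All)
  then show ?thesis
    using assms(2) by (simp add: agree_def)
qed

lemma flat_flat:
  assumes "is_pos A" "u \<in> Mset T (Mobj T (Mobj T A)) s"
  shows "flat T A s (flat T (Mobj T A) s u) = flat T A s (Mmap T (Mobj T (Mobj T A)) (flat T A) s u)"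
proof -
  have "agree (Mobj T (Mobj T (Mobj T A))) (\<lambda>s u. flat T A s (flat T (Mobj T A) s u))
      (\<lambda>s u. flat T A s (Mmap T (Mobj T (Mobj T A)) (flat T A) s u))"
    using T assms(1) by (simp add: monad_ok_def del: split_paired_All)
  then show ?thesis
    using assms(2) by (simp add: agree_def)
qed

lemma free_is_alg: "is_alg T (free T S)"
proof -
  have D: "is_pos (disc S)" by (rule disc_is_pos)
  show ?thesis
    unfolding is_alg_def Let_def agree_def fst_free snd_free carr_Mobj
    using Mobj_is_pos[OF D] flat_is_mor[OF D] flat_flat[OF D] flat_sing[OF D] by simp
qed

lemma alg_mor_comp:
  assumes "is_pos (fst Al)" "is_pos (fst Bl)" "is_pos (fst Cl)"
    and f: "alg_mor T Al Bl f" and g: "alg_mor T Bl Cl g"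
  shows "alg_mor T Al Cl (\<lambda>s x. g s (f s x))"
  unfolding alg_mor_def agree_def carr_Mobj
proof (intro conjI allI ballI)
  show "is_mor (fst Al) (fst Cl) (\<lambda>s x. g s (f s x))"
    using f g by (blast intro: is_mor_comp alg_mor_is_mor)
next
  fix s u assume u: "u \<in> Mset T (fst Al) s"
  have Mfu: "Mmap T (fst Al) f s u \<in> Mset T (fst Bl) s"
    using is_mor_in[OF Mmap_is_mor[OF assms(1,2) alg_mor_is_mor[OF f]]] u by simp
  have "g s (f s (snd Al s u)) = g s (snd Bl s (Mmap T (fst Al) f s u))"
    using alg_mor_commutes[OF f u] by simp
  also have "\<dots> = snd Cl s (Mmap T (fst Bl) g s (Mmap T (fst Al) f s u))"
    using alg_mor_commutes[OF g Mfu] .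
  also have "\<dots> = snd Cl s (Mmap T (fst Al) (\<lambda>s x. g s (f s x)) s u)"
    using Mmap_comp[OF assms(1-3) alg_mor_is_mor[OF f] alg_mor_is_mor[OF g] u] by simp
  finally show "g s (f s (snd Al s u)) = snd Cl s (Mmap T (fst Al) (\<lambda>s x. g s (f s x)) s u)" .
qed

section \<open>Free algebras\<close>

lemma free_ext_alg_mor:
  assumes Al: "is_alg T Al" and h: "is_mor (disc S) (fst Al) h"
  shows "alg_mor T (free T S) Al (\<lambda>s u. snd Al s (Mmap T (disc S) h s u))"
  unfolding alg_mor_def agree_def fst_free snd_free carr_Mobj
proof (intro conjI allI ballI)
  let ?A = "fst Al" and ?\<pi> = "snd Al" and ?D = "disc S"
  have D: "is_pos ?D" and A: "is_pos ?A" and MD: "is_pos (Mobj T ?D)" and MA: "is_pos (Mobj T ?A)"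
    using disc_is_pos is_alg_is_pos[OF Al] Mobj_is_pos by blast+
  have Mh: "is_mor (Mobj T ?D) (Mobj T ?A) (Mmap T ?D h)"
    by (rule Mmap_is_mor[OF D A h])
  show "is_mor (Mobj T ?D) ?A (\<lambda>s u. ?\<pi> s (Mmap T ?D h s u))"
    using Mh is_alg_is_mor[OF Al] by (rule is_mor_comp)
  fix s u assume u: "u \<in> Mset T (Mobj T ?D) s"
  have MMhu: "Mmap T (Mobj T ?D) (Mmap T ?D h) s u \<in> Mset T (Mobj T ?A) s"
    using is_mor_in[OF Mmap_is_mor[OF MD MA Mh]] u by simp
  have "?\<pi> s (Mmap T ?D h s (flat T ?D s u))
      = ?\<pi> s (flat T ?A s (Mmap T (Mobj T ?D) (Mmap T ?D h) s u))"
    using Mmap_flat[OF D A h u] by simp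
  also have "\<dots> = ?\<pi> s (Mmap T (Mobj T ?A) ?\<pi> s (Mmap T (Mobj T ?D) (Mmap T ?D h) s u))"
    using is_alg_assoc[OF Al MMhu] by simp
  also have "\<dots> = ?\<pi> s (Mmap T (Mobj T ?D) (\<lambda>s v. ?\<pi> s (Mmap T ?D h s v)) s u)"
    using Mmap_comp[OF MD MA A Mh is_alg_is_mor[OF Al] u] by simp
  finally show "?\<pi> s (Mmap T ?D h s (flat T ?D s u))
      = ?\<pi> s (Mmap T (Mobj T ?D) (\<lambda>s v. ?\<pi> s (Mmap T ?D h s v)) s u)" .
qed

lemma free_ext_sing:
  assumes Al: "is_alg T Al" and h: "is_mor (disc S) (fst Al) h" and a: "a \<in> S s"
  shows "snd Al s (Mmap T (disc S) h s (sing T (disc S) s a)) = h s a"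
proof -
  have "Mmap T (disc S) h s (sing T (disc S) s a) = sing T (fst Al) s (h s a)"
    using Mmap_sing[OF disc_is_pos is_alg_is_pos[OF Al] h] a by simp
  moreover have "h s a \<in> carr (fst Al) s"
    using is_mor_in[OF h] a by simp
  ultimately show ?thesis
    using is_alg_unit[OF Al] by simp
qed

lemma alg_mor_free_eq_ext:
  assumes C: "is_pos (fst Cl)" and g: "alg_mor T (free T S) Cl g" and u: "u \<in> Mset T (disc S) s"
  shows "g s u = snd Cl s (Mmap T (disc S) (\<lambda>s a. g s (sing T (disc S) s a)) s u)"
proof -
  let ?D = "disc S"
  have D: "is_pos ?D" and MD: "is_pos (Mobj T ?D)"
    using disc_is_pos Mobj_is_pos by blast+
  have sing: "is_mor ?D (Mobj T ?D) (sing T ?D)" and gm: "is_mor (Mobj T ?D) (fst Cl) g"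
    using sing_is_mor[OF D] alg_mor_is_mor[OF g] by simp_all
  have Msu: "Mmap T ?D (sing T ?D) s u \<in> Mset T (Mobj T ?D) s"
    using is_mor_in[OF Mmap_is_mor[OF D MD sing]] u by simp
  have "g s u = g s (flat T ?D s (Mmap T ?D (sing T ?D) s u))"
    using flat_Mmap_sing[OF D u] by simp
  also have "\<dots> = snd Cl s (Mmap T (Mobj T ?D) g s (Mmap T ?D (sing T ?D) s u))"
    using alg_mor_commutes[OF g] Msu by simp
  also have "\<dots> = snd Cl s (Mmap T ?D (\<lambda>s a. g s (sing T ?D s a)) s u)"
    using Mmap_comp[OF D MD C sing gm u] by simp
  finally show ?thesis .
qed

lemma free_alg_mor_eqI:
  assumes C: "is_pos (fst Cl)" and g: "alg_mor T (free T S) Cl g" and g': "alg_mor T (free T S) Cl g'"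
    and gen: "\<And>s a. a \<in> S s \<Longrightarrow> g s (sing T (disc S) s a) = g' s (sing T (disc S) s a)"
    and u: "u \<in> Mset T (disc S) s"
  shows "g s u = g' s u"
proof -
  have "is_mor (disc S) (fst Cl) (\<lambda>s a. g s (sing T (disc S) s a))"
    using is_mor_comp[OF sing_is_mor[OF disc_is_pos] alg_mor_is_mor[OF g, unfolded fst_free]] by simp
  then have "Mmap T (disc S) (\<lambda>s a. g s (sing T (disc S) s a)) s u
      = Mmap T (disc S) (\<lambda>s a. g' s (sing T (disc S) s a)) s u"
    using Mmap_cong[OF disc_is_pos C _ _ u] gen by simp
  then show ?thesis
    using alg_mor_free_eq_ext[OF C g u] alg_mor_free_eq_ext[OF C g' u] by simp
qed

lemma free_alg_mor_lift:
  assumes Al: "is_alg T Al" and Bl: "is_pos (fst Bl)"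
    and q: "alg_mor T Al Bl q" and q_onto: "\<And>s. carr (fst Bl) s \<subseteq> q s ` carr (fst Al) s"
    and f: "alg_mor T (free T S) Bl f"
  obtains \<phi> where "alg_mor T (free T S) Al \<phi>"
    and "\<And>s u. u \<in> Mset T (disc S) s \<Longrightarrow> f s u = q s (\<phi> s u)"
proof -
  let ?D = "disc S"
  define h where "h s a = (SOME t. t \<in> carr (fst Al) s \<and> q s t = f s (sing T ?D s a))" for s a
  have h: "h s a \<in> carr (fst Al) s \<and> q s (h s a) = f s (sing T ?D s a)" if a: "a \<in> S s" for s a
  proof -
    have "f s (sing T ?D s a) \<in> carr (fst Bl) s"
      using is_mor_in[OF is_mor_comp[OF sing_is_mor[OF disc_is_pos] alg_mor_is_mor[OF f, unfolded fst_free]]] a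
      by simp
    then have "\<exists>t. t \<in> carr (fst Al) s \<and> q s t = f s (sing T ?D s a)"
      using q_onto by force
    then show ?thesis
      unfolding h_def by (rule someI_ex)
  qed
  have hm: "is_mor ?D (fst Al) h"
    using is_alg_is_pos[OF Al] h by (blast intro: is_mor_from_disc)
  define \<phi> where "\<phi> s u = snd Al s (Mmap T ?D h s u)" for s u
  have \<phi>: "alg_mor T (free T S) Al \<phi>"
    unfolding \<phi>_def by (rule free_ext_alg_mor[OF Al hm])
  have q\<phi>: "alg_mor T (free T S) Bl (\<lambda>s u. q s (\<phi> s u))"
    using alg_mor_comp[OF _ is_alg_is_pos[OF Al] Bl \<phi> q] Mobj_is_pos[OF disc_is_pos] by simp
  have "f s u = q s (\<phi> s u)" if u: "u \<in> Mset T ?D s" for s u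
  proof (rule free_alg_mor_eqI[OF Bl f q\<phi> _ u])
    fix s a assume a: "a \<in> S s"
    show "f s (sing T ?D s a) = q s (\<phi> s (sing T ?D s a))"
      using h[OF a] free_ext_sing[OF Al hm a] unfolding \<phi>_def by simp
  qed
  with \<phi> show ?thesis
    using that by blast
qed

end

section \<open>Quotients by preorders on the carrier\<close>

locale carrier_preorder =
  fixes A :: "('s,'u) pos" and sq :: "'s \<Rightarrow> 'u \<Rightarrow> 'u \<Rightarrow> bool"
  assumes refl: "x \<in> carr A s \<Longrightarrow> sq s x x"
    and trans: "x \<in> carr A s \<Longrightarrow> y \<in> carr A s \<Longrightarrow> z \<in> carr A s \<Longrightarrow> sq s x y \<Longrightarrow> sq s y z \<Longrightarrow> sq s x z"
begin

lemma qrep_spec: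
  assumes "x \<in> carr A s"
  shows "qrep A sq s x \<in> carr A s \<and> sq s x (qrep A sq s x) \<and> sq s (qrep A sq s x) x"
  unfolding qrep_def by (rule someI[where x=x]) (simp add: assms refl)

lemma qrep_in_carr: "x \<in> carr A s \<Longrightarrow> qrep A sq s x \<in> carr A s"
  and sq_qrep: "x \<in> carr A s \<Longrightarrow> sq s x (qrep A sq s x)"
  and qrep_sq: "x \<in> carr A s \<Longrightarrow> sq s (qrep A sq s x) x"
  using qrep_spec by blast+

lemma qrep_eq_iff:
  assumes x: "x \<in> carr A s" and y: "y \<in> carr A s"
  shows "qrep A sq s x = qrep A sq s y \<longleftrightarrow> sq s x y \<and> sq s y x"
proof
  assume "qrep A sq s x = qrep A sq s y"
  then show "sq s x y \<and> sq s y x"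
    using trans qrep_in_carr sq_qrep qrep_sq x y by metis
next
  assume "sq s x y \<and> sq s y x"
  then have "(\<lambda>z. z \<in> carr A s \<and> sq s x z \<and> sq s z x) = (\<lambda>z. z \<in> carr A s \<and> sq s y z \<and> sq s z y)"
    using trans x y by blast
  then show "qrep A sq s x = qrep A sq s y"
    unfolding qrep_def by simp
qed

lemma sq_qrep_iff:
  assumes "x \<in> carr A s" "y \<in> carr A s"
  shows "sq s (qrep A sq s x) (qrep A sq s y) \<longleftrightarrow> sq s x y"
  using assms trans qrep_in_carr sq_qrep qrep_sq by metis

lemma quot_is_pos: "is_pos (quot A sq)"
  unfolding is_pos_def carr_quot leq_quot
proof (intro allI conjI ballI impI)
  fix s x y z
  assume "x \<in> qrep A sq s ` carr A s" "y \<in> qrep A sq s ` carr A s" "z \<in> qrep A sq s ` carr A s"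
  then obtain a b c where abc: "a \<in> carr A s" "b \<in> carr A s" "c \<in> carr A s"
    and "x = qrep A sq s a" "y = qrep A sq s b" "z = qrep A sq s c"
    by blast
  then show "sq s x x"
    and "sq s x y \<and> sq s y x \<Longrightarrow> x = y"
    and "sq s x y \<and> sq s y z \<Longrightarrow> sq s x z"
    using qrep_eq_iff sq_qrep_iff refl trans by metis+
qed

lemma up_closed_eq_qrep_preimage:
  assumes X: "X \<subseteq> carr A s" "\<forall>x\<in>X. \<forall>y\<in>carr A s. sq s x y \<longrightarrow> y \<in> X"
  shows "X = {y \<in> carr A s. qrep A sq s y \<in> qrep A sq s ` X}"
proof (intro set_eqI iffI)
  fix y assume "y \<in> {y \<in> carr A s. qrep A sq s y \<in> qrep A sq s ` X}"
  then obtain x where "x \<in> X" "y \<in> carr A s" "qrep A sq s x = qrep A sq s y"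
    by (auto simp: image_iff)
  then show "y \<in> X"
    using X qrep_eq_iff by blast
qed (use X in blast)

lemma finite_up_closed_subsets:
  assumes "finite (carr (quot A sq) s)"
  shows "finite {X. X \<subseteq> carr A s \<and> (\<forall>x\<in>X. \<forall>y\<in>carr A s. sq s x y \<longrightarrow> y \<in> X)}"
    (is "finite ?Up")
proof (rule inj_on_finite)
  show "inj_on (\<lambda>X. qrep A sq s ` X) ?Up"
  proof (rule inj_onI)
    fix X Y assume X: "X \<in> ?Up" and Y: "Y \<in> ?Up" and eq: "qrep A sq s ` X = qrep A sq s ` Y"
    have "X = {y \<in> carr A s. qrep A sq s y \<in> qrep A sq s ` X}"
      using X by (intro up_closed_eq_qrep_preimage) auto
    also have "\<dots> = Y"
      unfolding eq using Y by (intro up_closed_eq_qrep_preimage[symmetric]) auto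
    finally show "X = Y" .
  qed
  show "(\<lambda>X. qrep A sq s ` X) ` ?Up \<subseteq> Pow (carr (quot A sq) s)"
    by auto
  show "finite (Pow (carr (quot A sq) s))"
    using assms by simp
qed

lemma qrep_in_up_closed_iff:
  assumes P: "P \<subseteq> carr (quot A sq) s" "\<forall>x\<in>P. \<forall>y\<in>carr (quot A sq) s. sq s x y \<longrightarrow> y \<in> P"
    and t: "t \<in> carr A s"
  shows "qrep A sq s t \<in> P \<longleftrightarrow> (\<exists>c\<in>P. sq s c t)"
proof
  assume "qrep A sq s t \<in> P"
  then show "\<exists>c\<in>P. sq s c t"
    using qrep_sq[OF t] by blast
next
  assume "\<exists>c\<in>P. sq s c t"
  then obtain c where c: "c \<in> P" "sq s c t" by blast
  then have "c \<in> carr A s"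
    using P(1) qrep_in_carr by auto
  then have "sq s c (qrep A sq s t)"
    using trans c(2) sq_qrep t qrep_in_carr by blast
  then show "qrep A sq s t \<in> P"
    using P c(1) t by auto
qed

lemma
  assumes U: "\<forall>t\<in>U \<inter> carr A s. \<forall>t'\<in>carr A s. sq s t t' \<longrightarrow> t' \<in> U"
  shows qrep_image_subset: "qrep A sq s ` (U \<inter> carr A s) \<subseteq> carr (quot A sq) s"
    and qrep_image_up_closed: "\<forall>x\<in>qrep A sq s ` (U \<inter> carr A s). \<forall>y\<in>carr (quot A sq) s.
      sq s x y \<longrightarrow> y \<in> qrep A sq s ` (U \<inter> carr A s)"
    and qrep_in_qrep_image_iff: "t \<in> carr A s \<Longrightarrow> qrep A sq s t \<in> qrep A sq s ` (U \<inter> carr A s) \<longleftrightarrow> t \<in> U"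
proof -
  show "qrep A sq s ` (U \<inter> carr A s) \<subseteq> carr (quot A sq) s"
    by auto
  show "\<forall>x\<in>qrep A sq s ` (U \<inter> carr A s). \<forall>y\<in>carr (quot A sq) s.
      sq s x y \<longrightarrow> y \<in> qrep A sq s ` (U \<inter> carr A s)"
    using U sq_qrep_iff by fastforce
  show "t \<in> carr A s \<Longrightarrow> qrep A sq s t \<in> qrep A sq s ` (U \<inter> carr A s) \<longleftrightarrow> t \<in> U"
    using U qrep_eq_iff by blast
qed

end

lemma cong_ord_carrier_preorder: "cong_ord T Al sq \<Longrightarrow> carrier_preorder (fst Al) sq"
  unfolding cong_ord_def Let_def carrier_preorder_def by blast

lemma cong_ord_leq:
  "cong_ord T Al sq \<Longrightarrow> x \<in> carr (fst Al) s \<Longrightarrow> y \<in> carr (fst Al) s \<Longrightarrow> leq (fst Al) s x y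
    \<Longrightarrow> sq s x y"
  unfolding cong_ord_def Let_def by blast

lemma cong_ord_compat:
  "cong_ord T Al sq \<Longrightarrow> u \<in> Mset T (fst Al) s \<Longrightarrow> v \<in> Mset T (fst Al) s
    \<Longrightarrow> leq (Mobj T (quot (fst Al) sq)) s
          (Mmap T (fst Al) (qrep (fst Al) sq) s u) (Mmap T (fst Al) (qrep (fst Al) sq) s v)
    \<Longrightarrow> sq s (snd Al s u) (snd Al s v)"
  unfolding cong_ord_def Let_def by blast

lemma quot_alg_mor:
  assumes T: "monad_ok T" and Al: "is_alg T Al" and co: "cong_ord T Al sq"
  shows "alg_mor T Al (quot_alg T Al sq) (qrep (fst Al) sq)"
proof -
  let ?A = "fst Al" and ?q = "qrep (fst Al) sq" and ?Q = "quot (fst Al) sq"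
  interpret carrier_preorder ?A sq
    using co by (rule cong_ord_carrier_preorder)
  have q: "is_mor ?A ?Q ?q"
    unfolding is_mor_def using cong_ord_leq[OF co] sq_qrep_iff by simp
  have MQ: "is_pos (Mobj T ?Q)"
    using Mobj_is_pos[OF T quot_is_pos] .
  have "?q s (snd Al s u) = snd (quot_alg T Al sq) s (Mmap T ?A ?q s u)"
    if u: "u \<in> Mset T ?A s" for s u
  proof -
    define u' where "u' = (SOME u'. u' \<in> Mset T ?A s \<and> Mmap T ?A ?q s u' = Mmap T ?A ?q s u)"
    have u': "u' \<in> Mset T ?A s \<and> Mmap T ?A ?q s u' = Mmap T ?A ?q s u"
      unfolding u'_def by (rule someI[where x=u]) (simp add: u)
    have "leq (Mobj T ?Q) s (Mmap T ?A ?q s u) (Mmap T ?A ?q s u)"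
      using is_pos_refl[OF MQ is_mor_in[OF Mmap_is_mor[OF T is_alg_is_pos[OF Al] quot_is_pos q]]] u
      by simp
    then have "sq s (snd Al s u) (snd Al s u') \<and> sq s (snd Al s u') (snd Al s u)"
      using cong_ord_compat[OF co] u u' by metis
    moreover have "snd Al s u \<in> carr ?A s" "snd Al s u' \<in> carr ?A s"
      using is_mor_in[OF is_alg_is_mor[OF Al]] u u' by simp_all
    ultimately have "?q s (snd Al s u') = ?q s (snd Al s u)"
      using qrep_eq_iff by blast
    then show ?thesis
      by (simp add: quot_alg_def u'_def)
  qed
  with q show ?thesis
    by (simp add: alg_mor_def agree_def)
qed

lemma recognises_quot_alg_comp:
  assumes pre: "carrier_preorder (fst Al) sq"
    and \<phi>: "\<And>u. u \<in> carr (fst Dl) \<zeta> \<Longrightarrow> \<phi> \<zeta> u \<in> carr (fst Al) \<zeta>"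
    and U: "\<forall>t\<in>U \<inter> carr (fst Al) \<zeta>. \<forall>t'\<in>carr (fst Al) \<zeta>. sq \<zeta> t t' \<longrightarrow> t' \<in> U"
  shows "recognises Dl (quot_alg T Al sq) (\<lambda>s u. qrep (fst Al) sq s (\<phi> s u)) \<zeta>
    {u \<in> carr (fst Dl) \<zeta>. \<phi> \<zeta> u \<in> U}"
proof -
  interpret carrier_preorder "fst Al" sq
    by (rule pre)
  let ?P = "qrep (fst Al) sq \<zeta> ` (U \<inter> carr (fst Al) \<zeta>)"
  have "{u \<in> carr (fst Dl) \<zeta>. \<phi> \<zeta> u \<in> U} = {u \<in> carr (fst Dl) \<zeta>. qrep (fst Al) sq \<zeta> (\<phi> \<zeta> u) \<in> ?P}"
    using qrep_in_qrep_image_iff[OF U] \<phi> by auto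
  then show ?thesis
    unfolding recognises_def fst_quot_alg leq_quot
    using qrep_image_subset[OF U] qrep_image_up_closed[OF U] by blast
qed

section \<open>Contexts and the syntactic algebra\<close>

lemma finite_Union_Inter_nat_indexed:
  assumes "finite \<C>" and "\<And>C. C \<in> \<C> \<Longrightarrow> finite C"
  obtains m :: nat and n :: "nat \<Rightarrow> nat" and p :: "nat \<Rightarrow> nat \<Rightarrow> 'a"
  where "\<And>i k. i < m \<Longrightarrow> k < n i \<Longrightarrow> p i k \<in> \<Union>\<C>"
    and "(\<Union>i<m. \<Inter>k<n i. F (p i k)) = (\<Union>C\<in>\<C>. \<Inter>x\<in>C. F x)"
proof -
  obtain cs where cs: "set cs = \<C>"
    using finite_list[OF assms(1)] by blast
  obtain xs where xs: "\<And>C. C \<in> \<C> \<Longrightarrow> set (xs C) = C"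
    using assms(2) finite_list by metis
  have Inter_nth: "(\<Inter>k<length ys. F (ys ! k)) = (\<Inter>x\<in>set ys. F x)" for ys :: "'a list"
    by (auto simp: in_set_conv_nth) (use nth_mem in blast)
  have Union_nth: "(\<Union>i<length cs. G (cs ! i)) = (\<Union>C\<in>set cs. G C)" for G :: "'a set \<Rightarrow> 'b set"
    by (auto simp: in_set_conv_nth) (use nth_mem in blast)
  have "xs (cs ! i) ! k \<in> \<Union>\<C>" if "i < length cs" "k < length (xs (cs ! i))" for i k
  proof -
    have "cs ! i \<in> \<C>"
      using nth_mem[OF that(1)] cs by simp
    moreover have "xs (cs ! i) ! k \<in> set (xs (cs ! i))"
      using nth_mem[OF that(2)] .
    ultimately show ?thesis
      using xs by blast
  qed
  moreover have "(\<Inter>k<length (xs (cs ! i)). F (xs (cs ! i) ! k)) = (\<Inter>x\<in>cs ! i. F x)"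
    if "i \<in> {..<length cs}" for i
  proof -
    have "cs ! i \<in> \<C>"
      using that cs nth_mem by fastforce
    then show ?thesis
      by (simp add: Inter_nth xs)
  qed
  then have "(\<Union>i<length cs. \<Inter>k<length (xs (cs ! i)). F (xs (cs ! i) ! k)) = (\<Union>C\<in>\<C>. \<Inter>x\<in>C. F x)"
    using Union_nth[of "\<lambda>C. \<Inter>x\<in>C. F x"] cs by simp
  ultimately show ?thesis
    by (rule that)
qed

lemma has_syn_carrier_preorder:
  "has_syn T S \<xi> K \<Longrightarrow> carrier_preorder (Mobj T (disc S)) (synle T S \<xi> K)"
  unfolding has_syn_def using cong_ord_carrier_preorder by fastforce

lemma Syn_is_pos: "has_syn T S \<xi> K \<Longrightarrow> is_pos (fst (Syn T S \<xi> K))"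
  using carrier_preorder.quot_is_pos[OF has_syn_carrier_preorder] by simp

lemma syn_alg_mor:
  assumes "monad_ok T" and "has_syn T S \<xi> K"
  shows "alg_mor T (free T S) (Syn T S \<xi> K) (qrep (Mobj T (disc S)) (synle T S \<xi> K))"
  using quot_alg_mor[OF assms(1) free_is_alg[OF assms(1)]] assms(2) by (simp add: has_syn_def Syn_def)

lemma ctx_pre_up_closed:
  assumes "p \<in> ctxs T S \<zeta> \<xi>" "t \<in> ctx_pre T S \<zeta> \<xi> p K" "t' \<in> Mset T (disc S) \<zeta>"
    and "synle T S \<xi> K \<zeta> t t'"
  shows "t' \<in> ctx_pre T S \<zeta> \<xi> p K"
  using assms unfolding ctx_pre_def synle_def by blast

lemma finite_ctx_pre_family:
  assumes syn: "has_syn T S \<xi> K"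
  shows "finite ((\<lambda>p. ctx_pre T S \<zeta> \<xi> p K) ` ctxs T S \<zeta> \<xi>)"
proof -
  interpret carrier_preorder "Mobj T (disc S)" "synle T S \<xi> K"
    using has_syn_carrier_preorder[OF syn] .
  have "finite (carr (quot (Mobj T (disc S)) (synle T S \<xi> K)) \<zeta>)"
    using syn by (simp add: has_syn_def)
  then have "finite {X. X \<subseteq> Mset T (disc S) \<zeta> \<and>
      (\<forall>x\<in>X. \<forall>y\<in>Mset T (disc S) \<zeta>. synle T S \<xi> K \<zeta> x y \<longrightarrow> y \<in> X)}"
    using finite_up_closed_subsets by simp
  moreover have "(\<lambda>p. ctx_pre T S \<zeta> \<xi> p K) ` ctxs T S \<zeta> \<xi> \<subseteq> {X. X \<subseteq> Mset T (disc S) \<zeta> \<and>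
      (\<forall>x\<in>X. \<forall>y\<in>Mset T (disc S) \<zeta>. synle T S \<xi> K \<zeta> x y \<longrightarrow> y \<in> X)}"
    using ctx_pre_up_closed by (fastforce simp: ctx_pre_def)
  ultimately show ?thesis
    by (rule finite_subset[rotated])
qed

lemma synle_iff_finite_ctx_pre:
  assumes syn: "has_syn T S \<xi> K"
  shows "\<exists>C. finite C \<and> C \<subseteq> ctxs T S \<zeta> \<xi> \<and>
    (\<forall>t\<in>Mset T (disc S) \<zeta>. synle T S \<xi> K \<zeta> c t \<longleftrightarrow> (\<forall>p\<in>C. t \<in> ctx_pre T S \<zeta> \<xi> p K))"
proof -
  let ?F = "\<lambda>p. ctx_pre T S \<zeta> \<xi> p K"
  define Cs where "Cs = {p \<in> ctxs T S \<zeta> \<xi>. plug T S \<zeta> \<xi> p c \<in> K}"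
  have "finite (?F ` Cs)"
    using finite_ctx_pre_family[OF syn] by (rule finite_subset[rotated]) (auto simp: Cs_def)
  then obtain C where C: "C \<subseteq> Cs" "finite C" "?F ` Cs = ?F ` C"
    using finite_subset_image[of "?F ` Cs" ?F Cs] by blast
  have "synle T S \<xi> K \<zeta> c t \<longleftrightarrow> (\<forall>p\<in>C. t \<in> ?F p)" if t: "t \<in> Mset T (disc S) \<zeta>" for t
  proof -
    have "synle T S \<xi> K \<zeta> c t \<longleftrightarrow> t \<in> \<Inter>(?F ` Cs)"
      using t by (auto simp: synle_def ctx_pre_def Cs_def)
    also have "\<dots> \<longleftrightarrow> t \<in> \<Inter>(?F ` C)"
      by (simp only: C(3))
    finally show ?thesis
      by simp
  qed
  moreover have "C \<subseteq> ctxs T S \<zeta> \<xi>"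
    using C(1) by (auto simp: Cs_def)
  ultimately show ?thesis
    using C(2) by blast
qed

lemma Syn_up_closed_preimage_ctx_pre:
  assumes syn: "has_syn T S \<xi> K"
    and P: "P \<subseteq> carr (fst (Syn T S \<xi> K)) \<zeta>"
      "\<forall>x\<in>P. \<forall>y\<in>carr (fst (Syn T S \<xi> K)) \<zeta>. leq (fst (Syn T S \<xi> K)) \<zeta> x y \<longrightarrow> y \<in> P"
  obtains m :: nat and n :: "nat \<Rightarrow> nat" and p :: "nat \<Rightarrow> nat \<Rightarrow> 'u"
  where "\<forall>i<m. \<forall>k<n i. p i k \<in> ctxs T S \<zeta> \<xi>"
    and "\<And>t. t \<in> Mset T (disc S) \<zeta> \<Longrightarrow>
      t \<in> (\<Union>i<m. \<Inter>k<n i. ctx_pre T S \<zeta> \<xi> (p i k) K) \<longleftrightarrow> qrep (Mobj T (disc S)) (synle T S \<xi> K) \<zeta> t \<in> P"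
proof -
  let ?F = "\<lambda>p. ctx_pre T S \<zeta> \<xi> p K" and ?Q = "quot (Mobj T (disc S)) (synle T S \<xi> K)"
  interpret carrier_preorder "Mobj T (disc S)" "synle T S \<xi> K"
    using has_syn_carrier_preorder[OF syn] .
  have P': "P \<subseteq> carr ?Q \<zeta>" "\<forall>x\<in>P. \<forall>y\<in>carr ?Q \<zeta>. synle T S \<xi> K \<zeta> x y \<longrightarrow> y \<in> P"
    using P by simp_all
  have "finite P"
    using P'(1) syn finite_subset by (auto simp: has_syn_def)
  obtain C where C: "\<forall>c. finite (C c) \<and> C c \<subseteq> ctxs T S \<zeta> \<xi> \<and>
      (\<forall>t\<in>Mset T (disc S) \<zeta>. synle T S \<xi> K \<zeta> c t \<longleftrightarrow> (\<forall>p\<in>C c. t \<in> ?F p))"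
    using choice[OF allI[OF synle_iff_finite_ctx_pre[OF syn]]] by (rule exE)
  have "finite (C ` P)" and "\<And>D. D \<in> C ` P \<Longrightarrow> finite D"
    using \<open>finite P\<close> C by auto
  then obtain m :: nat and n :: "nat \<Rightarrow> nat" and p :: "nat \<Rightarrow> nat \<Rightarrow> 'u"
    where mnp: "\<And>i k. i < m \<Longrightarrow> k < n i \<Longrightarrow> p i k \<in> \<Union>(C ` P)"
      and eq: "(\<Union>i<m. \<Inter>k<n i. ?F (p i k)) = (\<Union>D\<in>C ` P. \<Inter>x\<in>D. ?F x)"
    by (rule finite_Union_Inter_nat_indexed[where F = ?F]) blast+
  show ?thesis
  proof (rule that)
    show "\<forall>i<m. \<forall>k<n i. p i k \<in> ctxs T S \<zeta> \<xi>"
      using mnp C by blast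
    fix t assume t: "t \<in> Mset T (disc S) \<zeta>"
    show "t \<in> (\<Union>i<m. \<Inter>k<n i. ?F (p i k)) \<longleftrightarrow> qrep (Mobj T (disc S)) (synle T S \<xi> K) \<zeta> t \<in> P"
      unfolding eq qrep_in_up_closed_iff[OF P' t[folded carr_Mobj]] using C t by auto
  qed
qed

lemma Union_Inter_ctx_pre_up_closed:
  assumes "\<forall>i<m. \<forall>k<n i. p i k \<in> ctxs T S \<zeta> \<xi>"
    and "t \<in> (\<Union>i<m. \<Inter>k<n i. ctx_pre T S \<zeta> \<xi> (p i k) K)"
    and "t' \<in> Mset T (disc S) \<zeta>" and "synle T S \<xi> K \<zeta> t t'"
  shows "t' \<in> (\<Union>i<m. \<Inter>k<n i. ctx_pre T S \<zeta> \<xi> (p i k) K)"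
proof -
  obtain i where i: "i < m" "\<And>k. k < n i \<Longrightarrow> t \<in> ctx_pre T S \<zeta> \<xi> (p i k) K"
    using assms(2) by blast
  have "t' \<in> ctx_pre T S \<zeta> \<xi> (p i k) K" if "k < n i" for k
    using ctx_pre_up_closed[OF _ i(2)[OF that] assms(3,4)] assms(1) i(1) that by blast
  then show ?thesis
    using i(1) by blast
qed

lemma Syn_recognisable_imp_ctx_pre_form:
  assumes T: "monad_ok T" and syn: "has_syn T S \<xi> K"
    and f: "alg_mor T (free T G) (Syn T S \<xi> K) f" and rec: "recognises (free T G) (Syn T S \<xi> K) f \<zeta> L"
  obtains \<phi> and m :: nat and n :: "nat \<Rightarrow> nat" and p :: "nat \<Rightarrow> nat \<Rightarrow> 'u"
  where "alg_mor T (free T G) (free T S) \<phi>" and "\<forall>i<m. \<forall>k<n i. p i k \<in> ctxs T S \<zeta> \<xi>"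
    and "L = {s \<in> Mset T (disc G) \<zeta>. \<phi> \<zeta> s \<in> (\<Union>i<m. \<Inter>k<n i. ctx_pre T S \<zeta> \<xi> (p i k) K)}"
proof -
  let ?q = "qrep (Mobj T (disc S)) (synle T S \<xi> K)"
  obtain P where P: "P \<subseteq> carr (fst (Syn T S \<xi> K)) \<zeta>"
      "\<forall>x\<in>P. \<forall>y\<in>carr (fst (Syn T S \<xi> K)) \<zeta>. leq (fst (Syn T S \<xi> K)) \<zeta> x y \<longrightarrow> y \<in> P"
    and L: "L = {s \<in> Mset T (disc G) \<zeta>. f \<zeta> s \<in> P}"
    using rec unfolding recognises_def by auto
  obtain \<phi> where \<phi>: "alg_mor T (free T G) (free T S) \<phi>"
    and f\<phi>: "\<And>s u. u \<in> Mset T (disc G) s \<Longrightarrow> f s u = ?q s (\<phi> s u)"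
    by (rule free_alg_mor_lift[OF T free_is_alg[OF T] Syn_is_pos[OF syn] syn_alg_mor[OF T syn] _ f]) auto
  obtain m :: nat and n :: "nat \<Rightarrow> nat" and p :: "nat \<Rightarrow> nat \<Rightarrow> 'u"
    where ctx: "\<forall>i<m. \<forall>k<n i. p i k \<in> ctxs T S \<zeta> \<xi>"
      and U: "\<And>t. t \<in> Mset T (disc S) \<zeta> \<Longrightarrow>
        t \<in> (\<Union>i<m. \<Inter>k<n i. ctx_pre T S \<zeta> \<xi> (p i k) K) \<longleftrightarrow> ?q \<zeta> t \<in> P"
    using Syn_up_closed_preimage_ctx_pre[OF syn P] by blast
  have "f \<zeta> s \<in> P \<longleftrightarrow> \<phi> \<zeta> s \<in> (\<Union>i<m. \<Inter>k<n i. ctx_pre T S \<zeta> \<xi> (p i k) K)"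
    if s: "s \<in> Mset T (disc G) \<zeta>" for s
  proof -
    have "\<phi> \<zeta> s \<in> Mset T (disc S) \<zeta>"
      using is_mor_in[OF alg_mor_is_mor[OF \<phi>]] s by simp
    then show ?thesis
      using f\<phi>[OF s] U by simp
  qed
  then have "L = {s \<in> Mset T (disc G) \<zeta>. \<phi> \<zeta> s \<in> (\<Union>i<m. \<Inter>k<n i. ctx_pre T S \<zeta> \<xi> (p i k) K)}"
    unfolding L by (simp cong: conj_cong)
  with \<phi> ctx that show ?thesis
    by blast
qed

lemma ctx_pre_form_imp_Syn_recognisable:
  assumes T: "monad_ok T" and syn: "has_syn T S \<xi> K"
    and \<phi>: "alg_mor T (free T G) (free T S) \<phi>" and ctx: "\<forall>i<m. \<forall>k<n i. p i k \<in> ctxs T S \<zeta> \<xi>"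
  shows "alg_mor T (free T G) (Syn T S \<xi> K) (\<lambda>s u. qrep (Mobj T (disc S)) (synle T S \<xi> K) s (\<phi> s u))"
    and "recognises (free T G) (Syn T S \<xi> K) (\<lambda>s u. qrep (Mobj T (disc S)) (synle T S \<xi> K) s (\<phi> s u)) \<zeta>
      {s \<in> Mset T (disc G) \<zeta>. \<phi> \<zeta> s \<in> (\<Union>i<m. \<Inter>k<n i. ctx_pre T S \<zeta> \<xi> (p i k) K)}"
proof -
  show "alg_mor T (free T G) (Syn T S \<xi> K) (\<lambda>s u. qrep (Mobj T (disc S)) (synle T S \<xi> K) s (\<phi> s u))"
    using alg_mor_comp[OF T _ _ Syn_is_pos[OF syn] \<phi> syn_alg_mor[OF T syn]]
      is_alg_is_pos[OF free_is_alg[OF T]] by blast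
  show "recognises (free T G) (Syn T S \<xi> K) (\<lambda>s u. qrep (Mobj T (disc S)) (synle T S \<xi> K) s (\<phi> s u)) \<zeta>
      {s \<in> Mset T (disc G) \<zeta>. \<phi> \<zeta> s \<in> (\<Union>i<m. \<Inter>k<n i. ctx_pre T S \<zeta> \<xi> (p i k) K)}"
    unfolding Syn_def
  proof (rule recognises_quot_alg_comp[where Dl = "free T G" and Al = "free T S", simplified])
    show "carrier_preorder (Mobj T (disc S)) (synle T S \<xi> K)"
      by (rule has_syn_carrier_preorder[OF syn])
    show "\<phi> \<zeta> u \<in> Mset T (disc S) \<zeta>" if "u \<in> Mset T (disc G) \<zeta>" for u
      using is_mor_in[OF alg_mor_is_mor[OF \<phi>]] that by simp
    show "\<forall>t\<in>(\<Union>i<m. \<Inter>k<n i. ctx_pre T S \<zeta> \<xi> (p i k) K) \<inter> Mset T (disc S) \<zeta>.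
        \<forall>t'\<in>Mset T (disc S) \<zeta>. synle T S \<xi> K \<zeta> t t' \<longrightarrow>
          t' \<in> (\<Union>i<m. \<Inter>k<n i. ctx_pre T S \<zeta> \<xi> (p i k) K)"
      using Union_Inter_ctx_pre_up_closed[OF ctx] by blast
  qed
qed

theorem proposition4p9:
  fixes T :: "('s,'u) mnd" and Sig Gam :: "'s \<Rightarrow> 'u set" and \<xi> \<zeta> :: 's and K L :: "'u set"
  assumes "monad_ok T"
    and "alphabet Sig" and "alphabet Gam"
    and "K \<subseteq> Mset T (disc Sig) \<xi>"
    and "has_syn T Sig \<xi> K"
    and "L \<subseteq> Mset T (disc Gam) \<zeta>"
  shows "(\<exists>f. alg_mor T (free T Gam) (Syn T Sig \<xi> K) f \<and>
              recognises (free T Gam) (Syn T Sig \<xi> K) f \<zeta> L)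
     \<longleftrightarrow> (\<exists>\<phi> (m::nat) (n::nat \<Rightarrow> nat) (p::nat \<Rightarrow> nat \<Rightarrow> 'u).
            alg_mor T (free T Gam) (free T Sig) \<phi> \<and>
            (\<forall>i<m. \<forall>k<n i. p i k \<in> ctxs T Sig \<zeta> \<xi>) \<and>
            L = {s \<in> Mset T (disc Gam) \<zeta>.
                   \<phi> \<zeta> s \<in> (\<Union>i<m. \<Inter>k<n i. ctx_pre T Sig \<zeta> \<xi> (p i k) K)})"
    (is "?recognised \<longleftrightarrow> ?ctx_pre_form")
proof
  assume ?recognised
  then obtain f where "alg_mor T (free T Gam) (Syn T Sig \<xi> K) f"
    and "recognises (free T Gam) (Syn T Sig \<xi> K) f \<zeta> L"
    by blast
  then show ?ctx_pre_form
    by (rule Syn_recognisable_imp_ctx_pre_form[OF assms(1,5)]) blast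
next
  assume ?ctx_pre_form
  then obtain \<phi> and m :: nat and n :: "nat \<Rightarrow> nat" and p :: "nat \<Rightarrow> nat \<Rightarrow> 'u"
    where \<phi>: "alg_mor T (free T Gam) (free T Sig) \<phi>" and ctx: "\<forall>i<m. \<forall>k<n i. p i k \<in> ctxs T Sig \<zeta> \<xi>"
      and L: "L = {s \<in> Mset T (disc Gam) \<zeta>. \<phi> \<zeta> s \<in> (\<Union>i<m. \<Inter>k<n i. ctx_pre T Sig \<zeta> \<xi> (p i k) K)}"
    by blast
  show ?recognised
    using ctx_pre_form_imp_Syn_recognisable[OF assms(1,5) \<phi> ctx] unfolding L[symmetric] by blast
qed

end
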